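(* Let $n\geqslant 3$ and let $P$, $P'$ be $n$-gonal suspensions in $\mathbb{R}^3$ with a fixed combinatorial equivalence between them, vertices labelled $x_0,x_1,\dots,x_n,x_{n+1}$ and $x'_0,\dots,x'_{n+1}$ as described in the context (corresponding vertices having corresponding labels). For $j=1,\dots,n$ write $j^+=j+1$ if $j<n$ and $n^+=1$, and let $\ell(a,b)$, $\ell'(a',b')$ denote lengths of edges of $P$, $P'$ (equivalently, the lengths of the corresponding sides in natural developments of $P$, $P'$). Define the polynomials $$q_j(t)=\det\begin{pmatrix}0&1&1&1&1\\1&0&\ell(x_0,x_j)^2&\ell(x_0,x_{j^+})^2&t^2\\1&\ell(x_0,x_j)^2&0&\ell(x_j,x_{j^+})^2&\ell(x_j,x_{n+1})^2\\1&\ell(x_0,x_{j^+})^2&\ell(x_j,x_{j^+})^2&0&\ell(x_{j^+},x_{n+1})^2\\1&t^2&\ell(x_j,x_{n+1})^2&\ell(x_{j^+},x_{n+1})^2&0\end{pmatrix},$$ $j=1,\dots,n$, and define $q'_j(t')$ by the same formula with $x_i,\ell,t$ replaced by $x'_i,\ell',t'$. Suppose that the system of $n$ algebraic equations $q'_j(t')=\delta\, q_j(t)$, $j=1,\dots,n$, in the three unknowns $\delta,t,t'$ has no real solution with $\delta>0$, $t>0$, $t'>0$. Then $P$ and $P'$ are not affine-equivalent.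
   Context: A polyhedron is a connected two-dimensional polyhedral surface in $\mathbb{R}^3$ composed of finitely many convex polygons (faces); it need not be convex and may self-intersect. An $n$-gonal suspension is a polyhedron combinatorially equivalent to a regular $n$-gonal bipyramid: it has vertices $x_0$ (south pole), $x_{n+1}$ (north pole) and equator vertices $x_1,\dots,x_n$ in cyclic order; its edges are $x_jx_{j^+}$, $x_0x_j$, $x_{n+1}x_j$ ($j=1,\dots,n$), and its faces are the triangles $x_0x_jx_{j^+}$ and $x_{n+1}x_jx_{j^+}$; $x_0$ and $x_{n+1}$ are not joined by an edge. Two combinatorially equivalent polyhedra are affine-equivalent if a nondegenerate affine map $\mathbb{R}^3\to\mathbb{R}^3$ carries the first onto the second and each vertex, edge and face to the corresponding one. *)

theory Defs
  imports "HOL-Analysis.Analysis"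
begin

definition jplus :: "nat \<Rightarrow> nat \<Rightarrow> nat" where
  "jplus n j = (if j < n then j + 1 else 1)"

text \<open>An n-gonal suspension, given by its labelled vertices x 0 (south pole),
  x 1, ..., x n (equator, in cyclic order), x (n+1) (north pole).
  The faces are the triangles x0 xj xj+ and x(n+1) xj xj+; being (convex,
  nondegenerate) polygonal faces, their vertices are not collinear; the vertices
  are pairwise distinct points.\<close>
definition suspension :: "nat \<Rightarrow> (nat \<Rightarrow> real^3) \<Rightarrow> bool" where
  "suspension n x \<longleftrightarrow> n \<ge> 3 \<and> inj_on x {0..n+1} \<and>
     (\<forall>j\<in>{1..n}. \<not> collinear {x 0, x j, x (jplus n j)} \<and>
                   \<not> collinear {x (n+1), x j, x (jplus n j)})"

text \<open>Affine equivalence of two combinatorially equivalent suspensions (with the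
  combinatorial equivalence given by the labelling): a nondegenerate affine map of
  R^3 sending each vertex to the corresponding one (it then carries edges and faces,
  i.e. segments and triangles, to the corresponding ones).\<close>
definition affine_equivalent :: "nat \<Rightarrow> (nat \<Rightarrow> real^3) \<Rightarrow> (nat \<Rightarrow> real^3) \<Rightarrow> bool" where
  "affine_equivalent n x x' \<longleftrightarrow>
     (\<exists>(M::real^3^3) b. det M \<noteq> 0 \<and> (\<forall>i\<in>{0..n+1}. M *v x i + b = x' i))"

definition det_entries :: "nat \<Rightarrow> (nat \<Rightarrow> nat \<Rightarrow> real) \<Rightarrow> real" where
  "det_entries k A = (\<Sum>p | p permutes {..<k}. of_int (sign p) * (\<Prod>i<k. A i (p i)))"

definition qpoly :: "nat \<Rightarrow> (nat \<Rightarrow> real^3) \<Rightarrow> nat \<Rightarrow> real \<Rightarrow> real" where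
  "qpoly n x j t =
     (let l = (\<lambda>a b. dist (x a) (x b)); jp = jplus n j; N = n + 1;
          M = [[0, 1, 1, 1, 1],
               [1, 0, (l 0 j)^2, (l 0 jp)^2, t^2],
               [1, (l 0 j)^2, 0, (l j jp)^2, (l j N)^2],
               [1, (l 0 jp)^2, (l j jp)^2, 0, (l jp N)^2],
               [1, t^2, (l j N)^2, (l jp N)^2, 0]]
      in det_entries 5 (\<lambda>r c. M ! r ! c))"

end

theory Submission
  imports Defs
begin

text \<open>At \<open>t = |x 0 - x (n+1)|\<close> the matrix defining \<open>q\<^sub>j(t)\<close> is the Cayley-Menger
  matrix of the tetrahedron \<open>x 0, x j, x j\<^sup>+, x (n+1)\<close>, so \<open>q\<^sub>j(t) = 288 vol\<^sup>2\<close> is 8 times the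
  squared triple product of its edge vectors at \<open>x 0\<close>. An affine map with linear part \<open>M\<close>
  multiplies every triple product by \<open>det M\<close>; hence, if \<open>P'\<close> is an affine image of \<open>P\<close>,
  then \<open>\<delta> = (det M)\<^sup>2\<close> and the two distances between the poles solve the system.\<close>

unbundle cross3_syntax

lemma sum_permutes_insert_signed:
  fixes F :: "('b \<Rightarrow> 'b) \<Rightarrow> 'a::comm_ring_1"
  assumes "finite S" "a \<notin> S"
  shows "(\<Sum>p | p permutes insert a S. of_int (sign p) * F p) =
    (\<Sum>b\<in>insert a S. (if a = b then 1 else -1) *
       (\<Sum>q | q permutes S. of_int (sign q) * F (Transposition.transpose a b \<circ> q)))"
proof -
  have "of_int (sign (Transposition.transpose a b \<circ> q)) =
          (if a = b then 1 else -1) * (of_int (sign q) :: 'a)"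
    if "q permutes S" for b q
  proof -
    have "permutation q"
      using that assms(1) permutation_permutes by blast
    then show ?thesis
      by (simp add: sign_compose permutation_swap_id sign_swap_id)
  qed
  then show ?thesis
    by (simp add: sum_over_permutations_insert[OF assms] sum_distrib_left mult.assoc)
qed

lemma inner_cross_matrix_vector_mult:
  "(A *v u) \<bullet> ((A *v v) \<times> (A *v w)) = det A * (u \<bullet> (v \<times> w))"
proof -
  have "(A *v u) \<bullet> y = u \<bullet> (transpose A *v y)" for y
    by (metis dot_lmul_matrix inner_commute transpose_matrix_vector)
  then show ?thesis
    by (simp only: cross_matrix_mult inner_scaleR_right)
qed

lemma det_entries_5_bordered:
  "det_entries 5 (\<lambda>i k. [[0, 1, 1, 1, 1],
                          [1, 0, a, b, t],
                          [1, a, 0, c, d],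
                          [1, b, c, 0, e],
                          [1, t, d, e, 0]] ! i ! k) =
     2 * (c*e*t + a*c*e + a*d*e + b*d*e + b*c*d + c*d*t + a*e*t + a*b*e + b*c*t + b*d*t
          + a*c*t + a*b*d)
   - 2 * (c*t*t + a*d*t + a*a*e + a*b*c + b*b*d + c*d*e + c*c*t + b*d*d + a*e*e + b*e*t)"
proof -
  have "{..<5::nat} = {0, 1, 2, 3, 4}"
    by auto
  then show ?thesis
    unfolding det_entries_def
    by (simp add: sum_permutes_insert_signed algebra_simps)
qed

lemma cayley_menger_det_entries:
  fixes p0 p1 p2 p3 :: "real^3"
  shows "det_entries 5 (\<lambda>i k.
     [[0, 1, 1, 1, 1],
      [1, 0, (dist p0 p1)^2, (dist p0 p2)^2, (dist p0 p3)^2],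
      [1, (dist p0 p1)^2, 0, (dist p1 p2)^2, (dist p1 p3)^2],
      [1, (dist p0 p2)^2, (dist p1 p2)^2, 0, (dist p2 p3)^2],
      [1, (dist p0 p3)^2, (dist p1 p3)^2, (dist p2 p3)^2, 0]] ! i ! k)
   = 8 * ((p1 - p0) \<bullet> ((p2 - p0) \<times> (p3 - p0)))^2"
  unfolding det_entries_5_bordered dist_norm power2_norm_eq_inner
  unfolding inner_vec_def sum_3 cross3_def vector_3 vector_minus_component inner_real_def
  by algebra

lemma qpoly_at_pole_distance:
  "qpoly n x j (dist (x 0) (x (n+1))) =
     8 * ((x j - x 0) \<bullet> ((x (jplus n j) - x 0) \<times> (x (n+1) - x 0)))^2"
  unfolding qpoly_def Let_def by (rule cayley_menger_det_entries)

lemma qpoly_affine_image: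
  assumes "\<forall>i\<in>{0..n+1}. M *v x i + b = x' i" and "j \<in> {1..n}"
  shows "qpoly n x' j (dist (x' 0) (x' (n+1))) =
           (det M)^2 * qpoly n x j (dist (x 0) (x (n+1)))"
proof -
  have linear_part: "x' i - x' 0 = M *v (x i - x 0)" if "i \<in> {0..n+1}" for i
  proof -
    have "x' i - x' 0 = (M *v x i + b) - (M *v x 0 + b)"
      using assms(1) that by simp
    then show ?thesis
      by (simp add: matrix_vector_mult_diff_distrib)
  qed
  have vertices: "j \<in> {0..n+1}" "jplus n j \<in> {0..n+1}" "n+1 \<in> {0..n+1}"
    using assms(2) by (auto simp: jplus_def)
  show ?thesis
    unfolding qpoly_at_pole_distance linear_part[OF vertices(1)] linear_part[OF vertices(2)]
      linear_part[OF vertices(3)] inner_cross_matrix_vector_mult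
    by (simp add: power_mult_distrib)
qed

lemma suspension_poles_distinct: "suspension n x \<Longrightarrow> x 0 \<noteq> x (n+1)"
  unfolding suspension_def by (auto dest: inj_onD)

theorem theorem7:
  fixes n :: nat and x x' :: "nat \<Rightarrow> real^3"
  assumes "n \<ge> 3"
    and "suspension n x" and "suspension n x'"
    and "\<not> (\<exists>\<delta> t t'. \<delta> > 0 \<and> t > 0 \<and> t' > 0 \<and>
                 (\<forall>j\<in>{1..n}. qpoly n x' j t' = \<delta> * qpoly n x j t))"
  shows "\<not> affine_equivalent n x x'"
proof
  assume "affine_equivalent n x x'"
  then obtain M :: "real^3^3" and b where "det M \<noteq> 0"
    and affine: "\<forall>i\<in>{0..n+1}. M *v x i + b = x' i"
    unfolding affine_equivalent_def by blast
  then have "(det M)^2 > 0"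
    by simp
  moreover have "dist (x 0) (x (n+1)) > 0" "dist (x' 0) (x' (n+1)) > 0"
    using suspension_poles_distinct assms(2,3) by auto
  ultimately show False
    using assms(4) qpoly_affine_image[OF affine] by blast
qed

end
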